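(* For all $L>0$ there exists $C>0$ such that for all $J\ge2$, all $\delta t>0$ with $\delta t/\delta x^2\le1/2$, and all $n\ge1$, $$\sum_{\ell=1}^{J-1}\Big|\delta t\sum_{k=0}^{n-1}(1+\delta t\,\lambda_\ell)^k\Big|^2\le C.$$
   Context: $\delta x=L/(J-1)$, $\lambda_\ell=-\frac4{\delta x^2}\sin^2\big(\frac{\ell\pi}{2J}\big)$ for $0\le\ell\le J-1$. *)

theory Defs
  imports Complex_Main
begin

definition dx :: "real \<Rightarrow> nat \<Rightarrow> real" where
  "dx L J = L / (real J - 1)"

definition lam :: "real \<Rightarrow> nat \<Rightarrow> nat \<Rightarrow> real" where
  "lam L J l = - 4 / (dx L J)^2 * (sin (real l * pi / (2 * real J)))^2"

end

theory Submission
  imports Defs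
begin

text \<open>
  For the mode \<open>\<ell>\<close>, \<open>\<delta>t \<Sum>\<^bsub>k<n\<^esub> (1 + \<delta>t \<lambda>\<^sub>\<ell>)\<^sup>k\<close> is the forward Euler
  approximation of \<open>\<integral>\<^bsub>0\<^esub>\<^bsup>n \<delta>t\<^esup> exp (\<lambda>\<^sub>\<ell> s) ds\<close>. Under the CFL condition the
  amplification factor \<open>1 + \<delta>t \<lambda>\<^sub>\<ell>\<close> lies in \<open>[-1, 1)\<close>, so this sum is at most
  \<open>2 / |\<lambda>\<^sub>\<ell>|\<close> in absolute value. Since \<open>sin x \<ge> x / 3\<close> on \<open>[0, 2]\<close>,
  \<open>|\<lambda>\<^sub>\<ell>| \<ge> 4 \<ell>\<^sup>2 / (3 \<delta>x J)\<^sup>2 \<ge> \<ell>\<^sup>2 / (9 L\<^sup>2)\<close>, so the \<open>\<ell>\<close>-th summand is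
  \<open>O(L\<^sup>4 / \<ell>\<^sup>4)\<close> uniformly in \<open>J\<close>, \<open>\<delta>t\<close> and \<open>n\<close>.
\<close>

lemma sin_ge_cubic:
  fixes x :: real
  assumes "0 \<le> x"
  shows "x - x ^ 3 / 6 \<le> sin x"
proof -
  have "\<bar>sin x - (\<Sum>m<3. sin_coeff m * x ^ m)\<bar> \<le> inverse (fact 3) * \<bar>x\<bar> ^ 3"
    by (rule Maclaurin_sin_bound)
  also have "(\<Sum>m<3. sin_coeff m * x ^ m) = x"
    by (simp add: numeral_3_eq_3 sin_coeff_def)
  also have "inverse (fact 3) * \<bar>x\<bar> ^ 3 = x ^ 3 / 6"
    using assms by (simp add: numeral_3_eq_3 field_simps)
  finally show ?thesis
    unfolding abs_le_iff by linarith
qed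

lemma sin_ge_third:
  fixes x :: real
  assumes "0 \<le> x" "x \<le> 2"
  shows "x / 3 \<le> sin x"
proof -
  have "x\<^sup>2 \<le> 2\<^sup>2"
    using assms by (intro power_mono) auto
  then have "x ^ 3 \<le> 4 * x"
    using assms(1) by (simp add: power3_eq_cube power2_eq_square mult_right_mono)
  then show ?thesis
    using sin_ge_cubic[OF assms(1)] by linarith
qed

lemma abs_sum_power_one_minus_le:
  fixes \<mu> :: real
  assumes "0 < \<mu>" "\<mu> \<le> 2"
  shows "\<bar>\<Sum>k<n. (1 - \<mu>) ^ k\<bar> \<le> 2 / \<mu>"
proof -
  have "\<bar>(1 - \<mu>) ^ n\<bar> \<le> 1"
    using assms unfolding power_abs by (intro power_le_one) auto
  then have "\<bar>1 - (1 - \<mu>) ^ n\<bar> \<le> 2"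
    by linarith
  moreover have "(\<Sum>k<n. (1 - \<mu>) ^ k) = (1 - (1 - \<mu>) ^ n) / \<mu>"
    using assms(1) by (simp add: sum_gp_strict)
  ultimately show ?thesis
    using assms(1) by (simp add: divide_right_mono)
qed

lemma forward_euler_sum_bound:
  fixes a dt :: real
  assumes "a < 0" "0 < dt" "dt * - a \<le> 2"
  shows "\<bar>dt * (\<Sum>k<n. (1 + dt * a) ^ k)\<bar> \<le> 2 / - a"
proof -
  have "\<bar>\<Sum>k<n. (1 - dt * - a) ^ k\<bar> \<le> 2 / (dt * - a)"
    using assms by (intro abs_sum_power_one_minus_le mult_pos_pos) auto
  then have "dt * \<bar>\<Sum>k<n. (1 + dt * a) ^ k\<bar> \<le> dt * (2 / (dt * - a))"
    using assms(2) by (intro mult_left_mono) auto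
  then show ?thesis
    using assms(2) by (simp add: abs_mult)
qed

lemma dx_mult_le:
  assumes "0 \<le> L" "2 \<le> J"
  shows "dx L J * real J \<le> 2 * L"
  using assms mult_left_mono[of 2 "real J" L] unfolding dx_def by (simp add: field_simps)

lemma sin_mode_ge:
  assumes "l < J"
  shows "real l / (3 * real J) \<le> sin (real l * pi / (2 * real J))"
proof -
  have "2 * real l \<le> pi * real l"
    by (rule mult_right_mono[OF pi_ge_two]) simp
  then have "real l / (3 * real J) \<le> real l * pi / (2 * real J) / 3"
    using assms by (simp add: field_simps)
  also have "\<dots> \<le> sin (real l * pi / (2 * real J))"
  proof (rule sin_ge_third)
    have "real l * pi / (2 * real J) \<le> pi / 2"
      using assms by (simp add: field_simps mult_right_mono)
    then show "real l * pi / (2 * real J) \<le> 2"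
      using pi_less_4 by linarith
  qed simp
  finally show ?thesis .
qed

lemma mode_sum_bound:
  assumes "0 < L" "2 \<le> J" "1 \<le> l" "l < J" "0 < dt" "dt / (dx L J)\<^sup>2 \<le> 1/2"
  shows "\<bar>dt * (\<Sum>k<n. (1 + dt * lam L J l) ^ k)\<bar> \<le> 18 * L\<^sup>2 / (real l)\<^sup>2"
proof -
  define h where "h = dx L J"
  define s where "s = sin (real l * pi / (2 * real J))"
  have h_pos: "0 < h"
    using assms(1,2) unfolding h_def dx_def by simp
  have s_ge: "real l / (3 * real J) \<le> s"
    unfolding s_def using assms(4) by (rule sin_mode_ge)
  have s_pos: "0 < s"
    using assms(3,4) by (intro order_less_le_trans[OF _ s_ge]) simp
  have lam_eq: "lam L J l = - (4 * s\<^sup>2 / h\<^sup>2)"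
    unfolding lam_def h_def s_def by simp
  have "dt * - lam L J l \<le> 2"
  proof -
    have "s\<^sup>2 \<le> 1"
      unfolding s_def abs_square_le_1 by simp
    then have "4 * s\<^sup>2 * (dt / h\<^sup>2) \<le> 4 * 1 * (1 / 2)"
      using assms(5,6) unfolding h_def by (intro mult_mono) auto
    then show ?thesis
      unfolding lam_eq by (simp add: mult.commute)
  qed
  then have "\<bar>dt * (\<Sum>k<n. (1 + dt * lam L J l) ^ k)\<bar> \<le> 2 / - lam L J l"
    using assms(5) h_pos s_pos lam_eq by (intro forward_euler_sum_bound) auto
  also have "\<dots> = h\<^sup>2 / (2 * s\<^sup>2)"
    unfolding lam_eq by simp
  also have "\<dots> \<le> h\<^sup>2 / (2 * (real l / (3 * real J))\<^sup>2)"
    using assms(3,4) s_ge s_pos by (intro divide_left_mono mult_left_mono power_mono) auto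
  also have "\<dots> = 9 / 2 * (h * real J)\<^sup>2 / (real l)\<^sup>2"
    using assms(3) by (simp add: field_simps power2_eq_square)
  also have "\<dots> \<le> 9 / 2 * (2 * L)\<^sup>2 / (real l)\<^sup>2"
    using dx_mult_le[of L J] assms(1,2) h_pos unfolding h_def
    by (intro divide_right_mono mult_left_mono power_mono) auto
  finally show ?thesis
    by (simp add: power2_eq_square)
qed

lemma mode_sum_square_le:
  assumes "0 < L" "2 \<le> J" "1 \<le> l" "l < J" "0 < dt" "dt / (dx L J)\<^sup>2 \<le> 1/2"
  shows "\<bar>dt * (\<Sum>k<n. (1 + dt * lam L J l) ^ k)\<bar>\<^sup>2 \<le> 324 * L ^ 4 * (1 / (real l)\<^sup>2)"
proof -
  have "\<bar>dt * (\<Sum>k<n. (1 + dt * lam L J l) ^ k)\<bar>\<^sup>2 \<le> (18 * L\<^sup>2 / (real l)\<^sup>2)\<^sup>2"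
    using assms by (intro power_mono mode_sum_bound) auto
  also have "\<dots> = 324 * L ^ 4 * (1 / (real l)\<^sup>2) * (1 / (real l)\<^sup>2)"
    by (simp add: power2_eq_square power4_eq_xxxx field_simps)
  also have "\<dots> \<le> 324 * L ^ 4 * (1 / (real l)\<^sup>2)"
    using assms(3) by (intro mult_left_le) auto
  finally show ?thesis .
qed

lemma sum_inverse_squares_le:
  "(\<Sum>l=1..m. 1 / (real l)\<^sup>2) \<le> 2"
proof -
  have telescope: "(\<Sum>l=1..m. 1 / (real l)\<^sup>2) \<le> 2 - 1 / real m" for m
  proof (induction m)
    case (Suc m)
    show ?case
    proof (cases "m = 0")
      case False
      then have "1 / (real m + 1)\<^sup>2 \<le> 1 / (real m * (real m + 1))"
        by (intro divide_left_mono) (auto simp: power2_eq_square)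
      also have "\<dots> = 1 / real m - 1 / (real m + 1)"
        using False by (simp add: field_simps)
      finally show ?thesis
        using Suc.IH by (simp add: add.commute)
    qed simp
  qed simp
  have "0 \<le> 1 / real m"
    by simp
  then show ?thesis
    using telescope[of m] by linarith
qed

theorem proposition3p4:
  fixes L :: real
  assumes "L > 0"
  shows "\<exists>C > 0. \<forall>J::nat. \<forall>dt::real. \<forall>n::nat.
           J \<ge> 2 \<longrightarrow> dt > 0 \<longrightarrow> dt / (dx L J)^2 \<le> 1/2 \<longrightarrow> n \<ge> 1 \<longrightarrow>
           (\<Sum>l=1..J-1. \<bar>dt * (\<Sum>k=0..n-1. (1 + dt * lam L J l) ^ k)\<bar>^2) \<le> C"
proof (intro exI[of _ "648 * L ^ 4"] conjI allI impI)
  show "0 < 648 * L ^ 4"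
    using assms by simp
  fix J :: nat and dt :: real and n :: nat
  assume J: "J \<ge> 2" and dt: "dt > 0" and cfl: "dt / (dx L J)^2 \<le> 1/2" and n: "n \<ge> 1"
  have range: "{0..n-1} = {..<n}"
    using n by auto
  have "(\<Sum>l=1..J-1. \<bar>dt * (\<Sum>k=0..n-1. (1 + dt * lam L J l) ^ k)\<bar>^2)
      \<le> (\<Sum>l=1..J-1. 324 * L ^ 4 * (1 / (real l)\<^sup>2))"
    unfolding range using assms J dt cfl by (intro sum_mono mode_sum_square_le) auto
  also have "\<dots> = 324 * L ^ 4 * (\<Sum>l=1..J-1. 1 / (real l)\<^sup>2)"
    by (simp add: sum_distrib_left)
  also have "\<dots> \<le> 324 * L ^ 4 * 2"
    using sum_inverse_squares_le by (intro mult_left_mono) auto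
  finally show "(\<Sum>l=1..J-1. \<bar>dt * (\<Sum>k=0..n-1. (1 + dt * lam L J l) ^ k)\<bar>^2) \<le> 648 * L ^ 4"
    by simp
qed

end
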